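(* Consider the Normal Partizan Domination game on a star $K_{1,n}$ with $n\geq 1$, whose universal (center) vertex has color $C$, with $a$ leaves of color $A$ and $b=n-a$ leaves of color $B$. If $a=b$, the value is $*2$. If $|a-b|=1$, the value is $*$. If $a\geq b+2$, the value is $\uparrow^{[a-b-1]}*$. If $b\geq a+2$, the value is $\downarrow_{[b-a-1]}*$.
   Context: Normal Partizan Domination game: a finite graph $G$ has each vertex colored $A$, $B$ or $C$. Alice and Bob alternately select a vertex; Alice may only select vertices colored $A$ or $C$, Bob only vertices colored $B$ or $C$. A vertex $u$ dominates $v$ if $u=v$ or $uv$ is an edge. A vertex may be selected only if it is playable, i.e. it dominates at least one vertex not dominated by the previously selected vertices; the game ends when the selected vertices form a dominating set. Under normal play the player unable to move loses. The game is regarded as a partizan combinatorial game with Alice as Left and Bob as Right, and its value is its value in Conway's combinatorial game theory ($\{X\mid Y\}$ has Left options $X$ and Right options $Y$; $G=H$ iff $G+(-H)$ is a second-player win). Notation: $*=\{0\mid 0\}$, $*2=\{0,*\mid 0,*\}$, $\uparrow=\{0\mid *\}$, $\downarrow=\{*\mid 0\}$; $\uparrow^{[1]}=\uparrow$, $\uparrow^{[m]}=\{\uparrow^{[m-1]}\mid *\}$ for $m\geq 2$; $\downarrow_{[1]}=\downarrow$, $\downarrow_{[m]}=\{*\mid \downarrow_{[m-1]}\}$ for $m\geq 2$; $J*$ denotes $J+*$. *)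

theory Defs
  imports Main
begin

datatype game = Game "game list" "game list"

fun neg :: "game \<Rightarrow> game" where
  "neg (Game L R) = Game (map neg R) (map neg L)"

lemma size_mem_list: "x \<in> set xs \<Longrightarrow> size x < Suc (size_list size xs)"
  by (induction xs) auto

function gplus :: "game \<Rightarrow> game \<Rightarrow> game" where
  "gplus (Game GL GR) (Game HL HR) =
     Game (map (\<lambda>x. gplus x (Game HL HR)) GL @ map (\<lambda>y. gplus (Game GL GR) y) HL)
          (map (\<lambda>x. gplus x (Game HL HR)) GR @ map (\<lambda>y. gplus (Game GL GR) y) HR)"
  by pat_completeness auto
termination
  by (relation "measure (\<lambda>(g,h). size g + size h)")
     (auto dest!: size_mem_list)

text \<open>\<open>wins True G\<close>: Left, moving first in G, wins under normal play;
  \<open>wins False G\<close>: Right, moving first in G, wins under normal play.\<close>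
function wins :: "bool \<Rightarrow> game \<Rightarrow> bool" where
  "wins True (Game L R) = (\<exists>g\<in>set L. \<not> wins False g)"
| "wins False (Game L R) = (\<exists>g\<in>set R. \<not> wins True g)"
  by pat_completeness auto
termination
  by (relation "measure (\<lambda>(p,g). size g)") (auto dest!: size_mem_list)

definition second_player_win :: "game \<Rightarrow> bool" where
  "second_player_win G \<longleftrightarrow> \<not> wins True G \<and> \<not> wins False G"

definition game_eq :: "game \<Rightarrow> game \<Rightarrow> bool" where
  "game_eq G H \<longleftrightarrow> second_player_win (gplus G (neg H))"

definition zero_g :: game where "zero_g = Game [] []"
definition star_g :: game where "star_g = Game [zero_g] [zero_g]"
definition star2_g :: game where "star2_g = Game [zero_g, star_g] [zero_g, star_g]"
definition up_g :: game where "up_g = Game [zero_g] [star_g]"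
definition down_g :: game where "down_g = Game [star_g] [zero_g]"

text \<open>\<open>upm m\<close> = up^[m], \<open>downm m\<close> = down_[m], meaningful for m \<ge> 1.\<close>
fun upm :: "nat \<Rightarrow> game" where
  "upm 0 = zero_g"
| "upm (Suc 0) = up_g"
| "upm (Suc (Suc k)) = Game [upm (Suc k)] [star_g]"

fun downm :: "nat \<Rightarrow> game" where
  "downm 0 = zero_g"
| "downm (Suc 0) = down_g"
| "downm (Suc (Suc k)) = Game [star_g] [downm (Suc k)]"

datatype color = A | B | C

text \<open>Graph on vertex set {0..<n} with adjacency relation E (symmetric, irreflexive).
  Closed neighbourhood: vertices dominated by v.\<close>
definition closed_nb :: "nat \<Rightarrow> (nat \<Rightarrow> nat \<Rightarrow> bool) \<Rightarrow> nat \<Rightarrow> nat set" where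
  "closed_nb n E v = {u. u < n \<and> (u = v \<or> E v u)}"

definition playable :: "nat \<Rightarrow> (nat \<Rightarrow> nat \<Rightarrow> bool) \<Rightarrow> nat set \<Rightarrow> nat \<Rightarrow> bool" where
  "playable n E D v \<longleftrightarrow> v < n \<and> \<not> closed_nb n E v \<subseteq> D"

definition left_moves :: "nat \<Rightarrow> (nat \<Rightarrow> nat \<Rightarrow> bool) \<Rightarrow> (nat \<Rightarrow> color) \<Rightarrow> nat set \<Rightarrow> nat list" where
  "left_moves n E col D = filter (\<lambda>v. (col v = A \<or> col v = C) \<and> playable n E D v) [0..<n]"

definition right_moves :: "nat \<Rightarrow> (nat \<Rightarrow> nat \<Rightarrow> bool) \<Rightarrow> (nat \<Rightarrow> color) \<Rightarrow> nat set \<Rightarrow> nat list" where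
  "right_moves n E col D = filter (\<lambda>v. (col v = B \<or> col v = C) \<and> playable n E D v) [0..<n]"

lemma dgame_term_aux:
  assumes "playable n E D v"
  shows "card ({..<n} - (D \<union> closed_nb n E v)) < card ({..<n} - D)"
proof -
  from assms obtain u where u: "u \<in> closed_nb n E v" "u \<notin> D"
    unfolding playable_def by auto
  hence "u < n" unfolding closed_nb_def by auto
  have sub: "{..<n} - (D \<union> closed_nb n E v) \<subset> {..<n} - D"
    using u \<open>u < n\<close> by auto
  show ?thesis by (rule psubset_card_mono) (use sub in auto)
qed

text \<open>Game value of the position in which the set D of vertices is already dominated.\<close>
function dgame :: "nat \<Rightarrow> (nat \<Rightarrow> nat \<Rightarrow> bool) \<Rightarrow> (nat \<Rightarrow> color) \<Rightarrow> nat set \<Rightarrow> game" where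
  "dgame n E col D =
     Game (map (\<lambda>v. dgame n E col (D \<union> closed_nb n E v)) (left_moves n E col D))
          (map (\<lambda>v. dgame n E col (D \<union> closed_nb n E v)) (right_moves n E col D))"
  by pat_completeness auto
termination
  by (relation "measure (\<lambda>(n,E,col,D). card ({..<n} - D))")
     (auto simp: left_moves_def right_moves_def intro: dgame_term_aux)

definition domination_game :: "nat \<Rightarrow> (nat \<Rightarrow> nat \<Rightarrow> bool) \<Rightarrow> (nat \<Rightarrow> color) \<Rightarrow> game" where
  "domination_game n E col = dgame n E col {}"

text \<open>Star K_{1,m}: vertices 0..m, centre 0, leaves 1..m.\<close>
definition star_edge :: "nat \<Rightarrow> nat \<Rightarrow> nat \<Rightarrow> bool" where
  "star_edge m u v \<longleftrightarrow> (u = 0 \<and> 1 \<le> v \<and> v \<le> m) \<or> (v = 0 \<and> 1 \<le> u \<and> u \<le> m)"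

end

theory Submission
  imports Defs
begin

(*
  Once a vertex has been played the centre is dominated, and the rest of the game only
  depends on the numbers p and q of undominated leaves coloured A and B: either player
  may end the game by taking the centre, and otherwise removes one leaf of their own
  colour. The values G(p, q) therefore satisfy G(0, 0) = 0 and
  G(p, q) = {0, G(p - 1, q) | 0, G(p, q - 1)}, with the second options present only when
  p > 0 and q > 0 respectively. This recursion is solved by *2 for p = q > 0, by * for
  |p - q| = 1, and by the canonical form {0, up^[k-1]* | 0} of up^[k]* for p - q = k + 1 >= 2
  (the gift-horse principle discards the dominated extra options); the case q > p follows
  by negation, since G(q, p) = -G(p, q).
*)

lemma neg_neg [simp]: "neg (neg G) = G"
  by (induction G) (auto simp: map_idI)

lemma neg_gplus: "neg (gplus G H) = gplus (neg G) (neg H)"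
  by (induction G H rule: gplus.induct) auto

lemma wins_neg: "wins p (neg G) = wins (\<not> p) G"
proof (induction G arbitrary: p)
  case (Game L R)
  then show ?case by (cases p) auto
qed

lemma wins_gplus_commute: "wins p (gplus G H) = wins p (gplus H G)"
proof (induction G H arbitrary: p rule: gplus.induct)
  case (1 GL GR HL HR)
  then show ?case by (cases p) (simp_all add: bex_Un, metis+)
qed

definition game_ge :: "game \<Rightarrow> game \<Rightarrow> bool" where
  "game_ge G H \<longleftrightarrow> \<not> wins False (gplus G (neg H))"

lemma wins_True_diff_iff: "wins True (gplus G (neg H)) \<longleftrightarrow> \<not> game_ge H G"
proof -
  have "wins True (gplus G (neg H)) = wins False (gplus (neg G) H)"
    using wins_neg[of False "gplus G (neg H)"] by (simp add: neg_gplus)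
  also have "\<dots> = wins False (gplus H (neg G))"
    by (rule wins_gplus_commute)
  finally show ?thesis
    by (simp add: game_ge_def)
qed

lemma game_eq_iff_game_ge: "game_eq G H \<longleftrightarrow> game_ge G H \<and> game_ge H G"
  by (auto simp: game_eq_def second_player_win_def wins_True_diff_iff game_ge_def)

lemma game_ge_Game:
  "game_ge (Game GL GR) (Game HL HR) \<longleftrightarrow>
     (\<forall>gr\<in>set GR. \<not> game_ge (Game HL HR) gr) \<and> (\<forall>hl\<in>set HL. \<not> game_ge hl (Game GL GR))"
proof -
  have "game_ge (Game GL GR) (Game HL HR) \<longleftrightarrow>
     (\<forall>gr\<in>set GR. wins True (gplus gr (neg (Game HL HR)))) \<and>
     (\<forall>hl\<in>set HL. wins True (gplus (Game GL GR) (neg hl)))"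
    by (simp add: game_ge_def ball_Un)
  then show ?thesis
    by (simp only: wins_True_diff_iff)
qed

lemma game_ge_refl [simp]: "game_ge G G"
proof (induction G)
  case (Game L R)
  have "\<not> game_ge (Game L R) gr" if "gr \<in> set R" for gr
    using Game(2)[OF that] that by (cases gr) (metis game_ge_Game)
  moreover have "\<not> game_ge gl (Game L R)" if "gl \<in> set L" for gl
    using Game(1)[OF that] that by (cases gl) (metis game_ge_Game)
  ultimately show ?case
    by (simp add: game_ge_Game)
qed

lemma not_game_ge_right_option [simp]: "gr \<in> set GR \<Longrightarrow> \<not> game_ge (Game GL GR) gr"
  by (cases gr) (metis game_ge_Game game_ge_refl)

lemma not_game_ge_left_option [simp]: "gl \<in> set GL \<Longrightarrow> \<not> game_ge gl (Game GL GR)"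
  by (cases gl) (metis game_ge_Game game_ge_refl)

lemma game_ge_trans: "game_ge G H \<Longrightarrow> game_ge H K \<Longrightarrow> game_ge G K"
proof (induction "size G + size H + size K" arbitrary: G H K rule: less_induct)
  case less
  obtain GL GR where G: "G = Game GL GR" by (cases G)
  obtain HL HR where H: "H = Game HL HR" by (cases H)
  obtain KL KR where K: "K = Game KL KR" by (cases K)
  have "\<not> game_ge K gr" if gr: "gr \<in> set GR" for gr
  proof
    assume "game_ge K gr"
    moreover have "size gr < size G"
      using G gr size_mem_list by fastforce
    ultimately have "game_ge H gr"
      using less.hyps[of H K gr] less.prems(2) by simp
    with less.prems(1) gr show False
      unfolding G H by (simp add: game_ge_Game)
  qed
  moreover have "\<not> game_ge kl G" if kl: "kl \<in> set KL" for kl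
  proof
    assume "game_ge kl G"
    moreover have "size kl < size K"
      using K kl size_mem_list by fastforce
    ultimately have "game_ge kl H"
      using less.hyps[of kl G H] less.prems(1) by simp
    with less.prems(2) kl show False
      unfolding H K by (simp add: game_ge_Game)
  qed
  ultimately show ?case
    unfolding G K by (simp add: game_ge_Game)
qed

lemma game_eq_refl [simp]: "game_eq G G"
  by (simp add: game_eq_iff_game_ge)

lemma game_eq_sym: "game_eq G H \<Longrightarrow> game_eq H G"
  by (simp add: game_eq_iff_game_ge)

lemma game_eq_trans: "game_eq G H \<Longrightarrow> game_eq H K \<Longrightarrow> game_eq G K"
  by (auto simp: game_eq_iff_game_ge intro: game_ge_trans)

lemma game_ge_neg_iff: "game_ge (neg G) (neg H) \<longleftrightarrow> game_ge H G"
  by (simp add: game_ge_def wins_gplus_commute)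

lemma game_eq_neg: "game_eq G H \<Longrightarrow> game_eq (neg G) (neg H)"
  by (simp add: game_eq_iff_game_ge game_ge_neg_iff)

lemma gift_horse:
  assumes "set L \<subseteq> set L'" "set R \<subseteq> set R'"
    and "\<forall>x\<in>set L' - set L. \<not> game_ge x (Game L R)"
    and "\<forall>y\<in>set R' - set R. \<not> game_ge (Game L R) y"
  shows "game_eq (Game L' R') (Game L R)"
  unfolding game_eq_iff_game_ge game_ge_Game
  using assms not_game_ge_left_option not_game_ge_right_option by blast

lemma game_ge_Game_cong:
  assumes "\<forall>x\<in>set R. \<exists>y\<in>set R'. game_eq x y"
    and "\<forall>y\<in>set L'. \<exists>x\<in>set L. game_eq x y"
  shows "game_ge (Game L R) (Game L' R')"
proof -
  have "\<not> game_ge (Game L' R') x" if x: "x \<in> set R" for x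
  proof
    assume "game_ge (Game L' R') x"
    moreover obtain y where "y \<in> set R'" "game_eq x y"
      using assms(1) x by blast
    ultimately have "game_ge (Game L' R') y"
      using game_ge_trans[of "Game L' R'" x y] by (simp add: game_eq_iff_game_ge)
    with \<open>y \<in> set R'\<close> show False
      by simp
  qed
  moreover have "\<not> game_ge y (Game L R)" if y: "y \<in> set L'" for y
  proof
    assume "game_ge y (Game L R)"
    moreover obtain x where "x \<in> set L" "game_eq x y"
      using assms(2) y by blast
    ultimately have "game_ge x (Game L R)"
      using game_ge_trans[of x y "Game L R"] by (simp add: game_eq_iff_game_ge)
    with \<open>x \<in> set L\<close> show False
      by simp
  qed
  ultimately show ?thesis
    by (simp add: game_ge_Game)
qed

lemma game_eq_Game_cong:
  assumes "rel_set game_eq (set L) (set L')" "rel_set game_eq (set R) (set R')"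
  shows "game_eq (Game L R) (Game L' R')"
proof -
  have "game_ge (Game L R) (Game L' R')"
    using assms by (intro game_ge_Game_cong) (auto simp: rel_set_def)
  moreover have "game_ge (Game L' R') (Game L R)"
    using assms by (intro game_ge_Game_cong) (fastforce simp: rel_set_def intro: game_eq_sym)+
  ultimately show ?thesis
    by (simp add: game_eq_iff_game_ge)
qed

lemma gplus_zero_right [simp]: "gplus G zero_g = G"
  by (induction G) (simp_all add: zero_g_def map_idI)

lemma gplus_zero_left [simp]: "gplus zero_g G = G"
  by (induction G) (simp_all add: zero_g_def map_idI)

lemma neg_zero [simp]: "neg zero_g = zero_g"
  by (simp add: zero_g_def)

lemma neg_star [simp]: "neg star_g = star_g"
  by (simp add: star_g_def)

lemma neg_star2 [simp]: "neg star2_g = star2_g"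
  by (simp add: star2_g_def)

lemma star_plus_star: "game_eq (gplus star_g star_g) zero_g"
  by (simp add: game_eq_iff_game_ge game_ge_Game star_g_def zero_g_def)

lemma upm_Suc: "upm (Suc k) = Game [upm k] [star_g]"
  by (cases k) (simp_all add: up_g_def)

lemma neg_upm: "neg (upm k) = downm k"
  by (induction k rule: upm.induct) (simp_all add: up_g_def down_g_def star_g_def zero_g_def)

lemma game_ge_upm_zero: "game_ge (upm k) zero_g"
  by (cases k) (simp_all add: upm_Suc game_ge_Game star_g_def zero_g_def)

fun upstar :: "nat \<Rightarrow> game" where
  "upstar 0 = star_g"
| "upstar (Suc k) = Game [zero_g, upstar k] [zero_g]"

lemma upm_plus_star: "game_eq (gplus (upm k) star_g) (upstar k)"
proof (induction k)
  case 0
  then show ?case by simp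
next
  case (Suc k)
  define U where "U = upm (Suc k)"
  have "gplus U star_g = Game [gplus (upm k) star_g, U] [gplus star_g star_g, U]"
    by (simp add: U_def upm_Suc star_g_def)
  also have "game_eq \<dots> (Game [upstar k, U] [zero_g, U])"
    using Suc star_plus_star by (intro game_eq_Game_cong) (auto simp: rel_set_def)
  finally have "game_eq (gplus U star_g) (Game [upstar k, U] [zero_g, U])" .
  moreover have "game_eq (Game [zero_g, upstar k, U] [zero_g, U]) (Game [upstar k, U] [zero_g, U])"
    using game_ge_upm_zero[of "Suc k"] by (intro gift_horse) (auto simp: U_def game_ge_Game zero_g_def)
  moreover have "game_eq (Game [zero_g, upstar k, U] [zero_g, U]) (upstar (Suc k))"
    using game_ge_upm_zero[of "Suc k"]
    by (simp, intro gift_horse) (auto simp: U_def upm_Suc game_ge_Game star_g_def zero_g_def)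
  ultimately show ?case
    unfolding U_def by (meson game_eq_sym game_eq_trans)
qed

lemma downm_plus_star: "game_eq (gplus (downm k) star_g) (neg (upstar k))"
  using game_eq_neg[OF upm_plus_star[of k]] by (simp add: neg_gplus neg_upm)


text \<open>The value of a position of the star game in which the centre is dominated and
  \<open>p\<close> leaves of colour \<open>A\<close> and \<open>q\<close> leaves of colour \<open>B\<close> are undominated.\<close>
definition leaf_value :: "nat \<Rightarrow> nat \<Rightarrow> game" where
  "leaf_value p q =
     (if p = q then (if p = 0 then zero_g else star2_g)
      else if q < p then upstar (p - q - 1) else neg (upstar (q - p - 1)))"

text \<open>The options of such a position, up to equality: taking the centre ends the game,
  taking a leaf removes it.\<close>
definition leaf_game :: "nat \<Rightarrow> nat \<Rightarrow> game" where
  "leaf_game p q =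
     Game (zero_g # (if 0 < p then [leaf_value (p - 1) q] else []))
          (zero_g # (if 0 < q then [leaf_value p (q - 1)] else []))"

lemma leaf_value_swap: "leaf_value q p = neg (leaf_value p q)"
  by (simp add: leaf_value_def)

lemma leaf_game_swap: "leaf_game q p = neg (leaf_game p q)"
  by (simp add: leaf_game_def) (intro conjI impI leaf_value_swap)

lemma leaf_game_eq_leaf_value_ge:
  assumes "q \<le> p" "0 < p"
  shows "game_eq (leaf_game p q) (leaf_value p q)"
proof -
  consider "p = q" | "p = q + 1" | k where "p = q + k + 2"
  proof -
    obtain j where "p = q + j"
      using assms(1) le_Suc_ex by blast
    moreover consider "j = 0" | "j = 1" | k where "j = k + 2"
      by (metis add_2_eq_Suc' not0_implies_Suc One_nat_def)
    ultimately show thesis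
      using that by auto
  qed
  then show ?thesis
  proof cases
    case 1
    then show ?thesis
      using assms by (auto simp: leaf_game_def leaf_value_def star2_g_def)
  next
    case 2
    have "game_eq (Game [zero_g, star2_g] [zero_g, upstar 1]) star_g"
      unfolding star_g_def
      by (intro gift_horse) (auto simp: game_ge_Game star2_g_def star_g_def zero_g_def)
    moreover have "game_eq (Game [zero_g, zero_g] [zero_g]) star_g"
      unfolding star_g_def by (intro game_eq_Game_cong) (auto simp: rel_set_def)
    ultimately show ?thesis
      using 2 by (cases "q = 0") (auto simp: leaf_game_def leaf_value_def)
  next
    case 3
    have "game_eq (Game [zero_g, upstar k] [zero_g, upstar (Suc (Suc k))]) (upstar (Suc k))"
      by (simp, intro gift_horse) (auto simp: game_ge_Game zero_g_def)
    then show ?thesis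
      using 3 by (cases "q = 0") (auto simp: leaf_game_def leaf_value_def)
  qed
qed

lemma leaf_game_eq_leaf_value:
  assumes "0 < p + q"
  shows "game_eq (leaf_game p q) (leaf_value p q)"
proof (cases "q \<le> p")
  case True
  with assms show ?thesis
    by (intro leaf_game_eq_leaf_value_ge) auto
next
  case False
  then have "game_eq (leaf_game q p) (leaf_value q p)"
    by (intro leaf_game_eq_leaf_value_ge) auto
  then have "game_eq (neg (leaf_game q p)) (neg (leaf_value q p))"
    by (rule game_eq_neg)
  then show ?thesis
    by (simp only: leaf_game_swap[of q p] leaf_value_swap[of q p] neg_neg)
qed


lemma rel_set_image_insert:
  assumes "R (f a) b" "\<And>x. x \<in> S \<Longrightarrow> R (f x) c" "P \<longleftrightarrow> S \<noteq> {}"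
  shows "rel_set R (f ` insert a S) (set (b # (if P then [c] else [])))"
  using assms by (auto simp: rel_set_def)

declare dgame.simps [simp del]

lemma dgame_dominated: "{..<N} \<subseteq> D \<Longrightarrow> dgame N E col D = zero_g"
  by (subst dgame.simps)
     (auto simp: zero_g_def left_moves_def right_moves_def playable_def closed_nb_def filter_empty_conv)

lemma closed_nb_star_centre: "closed_nb (Suc n) (star_edge n) 0 = {..n}"
  by (auto simp: closed_nb_def star_edge_def)

lemma closed_nb_star_leaf: "i \<in> {1..n} \<Longrightarrow> closed_nb (Suc n) (star_edge n) i = {0, i}"
  by (auto simp: closed_nb_def star_edge_def)

text \<open>The first move dominates the centre, whichever vertex is chosen.\<close>
lemma dgame_star_start:
  assumes "1 \<le> n"
  shows "dgame (n + 1) (star_edge n) col {} = dgame (n + 1) (star_edge n) col {0}"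
proof -
  have "playable (n + 1) (star_edge n) {} v \<longleftrightarrow> playable (n + 1) (star_edge n) {0} v" for v
  proof -
    consider "v = 0" | "v \<in> {1..n}" | "n < v"
      by force
    then show ?thesis
      using assms by cases (auto simp: playable_def closed_nb_star_centre closed_nb_star_leaf)
  qed
  then have moves: "left_moves (n + 1) (star_edge n) col {} = left_moves (n + 1) (star_edge n) col {0}"
      "right_moves (n + 1) (star_edge n) col {} = right_moves (n + 1) (star_edge n) col {0}"
    by (simp_all add: left_moves_def right_moves_def)
  have "0 \<in> closed_nb (Suc n) (star_edge n) v" if "v < Suc n" for v
    using that by (auto simp: closed_nb_def star_edge_def)
  then show ?thesis
    unfolding dgame.simps[of _ _ _ "{}"] dgame.simps[of _ _ _ "{0}"] moves
    by (intro arg_cong2[where f = Game] map_cong refl)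
       (simp_all add: left_moves_def right_moves_def insert_absorb del: upt_Suc)
qed

definition leaf_count :: "nat \<Rightarrow> (nat \<Rightarrow> color) \<Rightarrow> color \<Rightarrow> nat set \<Rightarrow> nat" where
  "leaf_count n col X D = card {i \<in> {1..n} - D. col i = X}"

lemma leaf_count_pos_iff: "0 < leaf_count n col X D \<longleftrightarrow> {i \<in> {1..n} - D. col i = X} \<noteq> {}"
  by (simp add: leaf_count_def card_gt_0_iff)

lemma leaf_count_play_leaf:
  assumes "v \<in> {1..n} - D"
  shows "leaf_count n col X (D \<union> {0, v}) =
           (if col v = X then leaf_count n col X D - 1 else leaf_count n col X D)"
proof -
  have "{i \<in> {1..n} - (D \<union> {0, v}). col i = X} = {i \<in> {1..n} - D. col i = X} - {v}"
    by auto
  then show ?thesis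
    using assms by (simp add: leaf_count_def card_Diff_singleton_if)
qed

context
  fixes n :: nat and col :: "nat \<Rightarrow> color"
  assumes centre_C: "col 0 = C" and leaves_AB: "\<forall>i\<in>{1..n}. col i = A \<or> col i = B"
begin

lemma leaf_count_A_plus_B: "leaf_count n col A D + leaf_count n col B D = card ({1..n} - D)"
proof -
  have "card ({1..n} - D) = card ({i \<in> {1..n} - D. col i = A} \<union> {i \<in> {1..n} - D. col i = B})"
    using leaves_AB by (intro arg_cong[where f = card]) auto
  also have "\<dots> = leaf_count n col A D + leaf_count n col B D"
    unfolding leaf_count_def by (rule card_Un_disjoint) auto
  finally show ?thesis
    by simp
qed

lemma set_moves_star:
  assumes "0 \<in> D" "X \<noteq> C"
  shows "set (filter (\<lambda>v. (col v = X \<or> col v = C) \<and> playable (n + 1) (star_edge n) D v) [0..<n + 1]) =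
           (if {1..n} \<subseteq> D then {} else insert 0 {v \<in> {1..n} - D. col v = X})"
proof -
  have "{..n} = insert 0 {1..n}"
    by auto
  with assms(1) have centre: "playable (n + 1) (star_edge n) D 0 \<longleftrightarrow> \<not> {1..n} \<subseteq> D"
    by (simp add: playable_def closed_nb_star_centre)
  have leaf: "playable (n + 1) (star_edge n) D v \<longleftrightarrow> v \<notin> D" if "v \<in> {1..n}" for v
    using assms(1) that by (auto simp: playable_def closed_nb_star_leaf)
  have "v \<in> set (filter (\<lambda>v. (col v = X \<or> col v = C) \<and> playable (n + 1) (star_edge n) D v) [0..<n + 1])
      \<longleftrightarrow> v \<in> (if {1..n} \<subseteq> D then {} else insert 0 {v \<in> {1..n} - D. col v = X})" for v
  proof -
    consider "v = 0" | "v \<in> {1..n}" | "n < v"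
      by force
    then show ?thesis
    proof cases
      case 1
      then show ?thesis
        using centre centre_C by (simp del: upt_Suc)
    next
      case 2
      then show ?thesis
        using leaf[OF 2] leaves_AB[rule_format, OF 2] assms(2) by (auto simp del: upt_Suc)
    next
      case 3
      then show ?thesis
        by (simp del: upt_Suc)
    qed
  qed
  then show ?thesis
    by blast
qed

lemma dgame_star_eq_leaf_value:
  assumes "0 \<in> D"
  shows "game_eq (dgame (n + 1) (star_edge n) col D)
           (leaf_value (leaf_count n col A D) (leaf_count n col B D))"
  using assms
proof (induction "card ({1..n} - D)" arbitrary: D rule: less_induct)
  case less
  let ?f = "\<lambda>v. dgame (n + 1) (star_edge n) col (D \<union> closed_nb (n + 1) (star_edge n) v)"
  let ?p = "leaf_count n col A D" and ?q = "leaf_count n col B D"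
  show ?case
  proof (cases "{1..n} \<subseteq> D")
    case True
    have "{..<n + 1} = insert 0 {1..n}"
      by auto
    with True less.prems have "dgame (n + 1) (star_edge n) col D = zero_g"
      by (intro dgame_dominated) auto
    moreover have "?p = 0" "?q = 0"
      using True by (simp_all add: leaf_count_def Diff_eq_empty_iff[THEN iffD2])
    ultimately show ?thesis
      by (simp add: leaf_value_def)
  next
    case False
    have f_centre: "?f 0 = zero_g"
      by (rule dgame_dominated) (auto simp: closed_nb_star_centre)
    have f_leaf: "game_eq (?f v)
        (leaf_value (leaf_count n col A (D \<union> {0, v})) (leaf_count n col B (D \<union> {0, v})))"
      if v: "v \<in> {1..n} - D" for v
    proof -
      have "{1..n} - (D \<union> {0, v}) \<subset> {1..n} - D"
        using v by blast
      then have "card ({1..n} - (D \<union> {0, v})) < card ({1..n} - D)"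
        by (simp add: psubset_card_mono)
      with less.hyps show ?thesis
        using v by (simp add: closed_nb_star_leaf)
    qed
    have f_A: "game_eq (?f v) (leaf_value (?p - 1) ?q)" if "v \<in> {1..n} - D" "col v = A" for v
      using f_leaf[of v] that leaf_count_play_leaf[OF that(1)] by simp
    have f_B: "game_eq (?f v) (leaf_value ?p (?q - 1))" if "v \<in> {1..n} - D" "col v = B" for v
      using f_leaf[of v] that leaf_count_play_leaf[OF that(1)] by simp
    have moves: "set (left_moves (n + 1) (star_edge n) col D) = insert 0 {v \<in> {1..n} - D. col v = A}"
      "set (right_moves (n + 1) (star_edge n) col D) = insert 0 {v \<in> {1..n} - D. col v = B}"
      using set_moves_star[OF less.prems] False by (simp_all add: left_moves_def right_moves_def)
    have "rel_set game_eq (?f ` insert 0 {v \<in> {1..n} - D. col v = A})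
        (set (zero_g # (if 0 < ?p then [leaf_value (?p - 1) ?q] else [])))"
      using f_centre f_A leaf_count_pos_iff by (intro rel_set_image_insert) auto
    moreover have "rel_set game_eq (?f ` insert 0 {v \<in> {1..n} - D. col v = B})
        (set (zero_g # (if 0 < ?q then [leaf_value ?p (?q - 1)] else [])))"
      using f_centre f_B leaf_count_pos_iff by (intro rel_set_image_insert) auto
    ultimately have "game_eq (dgame (n + 1) (star_edge n) col D) (leaf_game ?p ?q)"
      unfolding dgame.simps[of _ _ _ D] leaf_game_def
      by (intro game_eq_Game_cong) (simp_all only: set_map moves)
    moreover have "0 < ?p + ?q"
      using False by (simp add: leaf_count_A_plus_B card_gt_0_iff)
    ultimately show ?thesis
      using game_eq_trans leaf_game_eq_leaf_value by metis
  qed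
qed

end

theorem theorem7:
  fixes n a b :: nat and col :: "nat \<Rightarrow> color"
  assumes "n \<ge> 1"
    and "col 0 = C"
    and "\<forall>i\<in>{1..n}. col i = A \<or> col i = B"
    and "a = card {i\<in>{1..n}. col i = A}"
    and "b = n - a"
  shows "(a = b \<longrightarrow> game_eq (domination_game (n+1) (star_edge n) col) star2_g)
       \<and> ((a = b + 1 \<or> b = a + 1) \<longrightarrow> game_eq (domination_game (n+1) (star_edge n) col) star_g)
       \<and> (a \<ge> b + 2 \<longrightarrow> game_eq (domination_game (n+1) (star_edge n) col) (gplus (upm (a - b - 1)) star_g))
       \<and> (b \<ge> a + 2 \<longrightarrow> game_eq (domination_game (n+1) (star_edge n) col) (gplus (downm (b - a - 1)) star_g))"
proof -
  let ?G = "domination_game (n+1) (star_edge n) col"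
  have "{1..n} - {0} = {1..n}"
    by auto
  then have count_A: "leaf_count n col A {0} = a" and "leaf_count n col A {0} + leaf_count n col B {0} = n"
    using assms(4) leaf_count_A_plus_B[OF assms(2,3), of "{0}"] by (simp_all add: leaf_count_def)
  with assms(5) have count_B: "leaf_count n col B {0} = b" and "a + b = n"
    by simp_all
  have game_value: "game_eq ?G (leaf_value a b)"
    using dgame_star_eq_leaf_value[OF assms(2,3), of "{0}"] dgame_star_start[OF assms(1)] count_A count_B
    by (simp add: domination_game_def)
  show ?thesis
  proof (intro conjI impI)
    show "game_eq ?G star2_g" if "a = b"
      using game_value that \<open>a + b = n\<close> assms(1) by (simp add: leaf_value_def)
    show "game_eq ?G star_g" if "a = b + 1 \<or> b = a + 1"
      using game_value that by (auto simp: leaf_value_def)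
    show "game_eq ?G (gplus (upm (a - b - 1)) star_g)" if "a \<ge> b + 2"
      using game_value that game_eq_trans[OF _ game_eq_sym[OF upm_plus_star]] by (simp add: leaf_value_def)
    show "game_eq ?G (gplus (downm (b - a - 1)) star_g)" if "b \<ge> a + 2"
      using game_value that game_eq_trans[OF _ game_eq_sym[OF downm_plus_star]] by (simp add: leaf_value_def)
  qed
qed

end
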